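(* Let $X$ be a uniformly locally finite metric space and let $h$ and $k$ be admissible operators on $\ell_2(X)$. Then: (a) $\|h-k\|=\|(h-k)\restriction_{c_{00}(X)}\|$, where $h-k$ is defined on $\mathrm{dom}(h)\cap\mathrm{dom}(k)$ and norms are possibly infinite; (b) if $h-k$ is bounded on $c_{00}(X)$, then $\mathrm{dom}(h)=\mathrm{dom}(k)$.
   Context: $(\delta_x)$ is the canonical basis of $\ell_2(X)$ and $c_{00}(X)$ the space of finitely supported vectors. An operator $h$ on $\ell_2(X)$ (a possibly unbounded linear map on a subspace $\mathrm{dom}(h)$) is admissible if it is closed, $c_{00}(X)\subseteq\mathrm{dom}(h)$, and $h\xi=\sum_{y\in X}\langle\xi,\delta_y\rangle h\delta_y$ for all $\xi\in\mathrm{dom}(h)$. For an operator $h$, $\|h\|=\sup\{\|h\xi\|:\xi\in\mathrm{dom}(h),\|\xi\|\le1\}\in[0,\infty]$. *)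

theory Defs
  imports "HOL-Analysis.Analysis"
begin

text \<open>The space X is modelled as a type 'a of class metric_space (X = UNIV).
  Vectors of l2(X) are functions 'a => complex that are square summable.\<close>

definition unif_locally_finite :: "'a::metric_space itself \<Rightarrow> bool" where
  "unif_locally_finite _ \<longleftrightarrow>
     (\<forall>r::real. \<exists>N::nat. \<forall>x::'a. finite (cball x r) \<and> card (cball x r) \<le> N)"

definition l2 :: "('a \<Rightarrow> complex) set" where
  "l2 = {f. (\<lambda>x. (cmod (f x))\<^sup>2) summable_on UNIV}"

definition l2norm :: "('a \<Rightarrow> complex) \<Rightarrow> real" where
  "l2norm f = sqrt (infsum (\<lambda>x. (cmod (f x))\<^sup>2) UNIV)"

definition delta :: "'a \<Rightarrow> 'a \<Rightarrow> complex" where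
  "delta y = (\<lambda>x. if x = y then 1 else 0)"

definition c00 :: "('a \<Rightarrow> complex) set" where
  "c00 = {f. finite {x. f x \<noteq> 0}}"

definition is_operator :: "('a \<Rightarrow> complex) set \<Rightarrow> (('a \<Rightarrow> complex) \<Rightarrow> ('a \<Rightarrow> complex)) \<Rightarrow> bool" where
  "is_operator D h \<longleftrightarrow>
     D \<subseteq> l2 \<and> (\<lambda>x. 0) \<in> D \<and>
     (\<forall>\<xi>\<in>D. \<forall>\<eta>\<in>D. (\<lambda>x. \<xi> x + \<eta> x) \<in> D \<and> h (\<lambda>x. \<xi> x + \<eta> x) = (\<lambda>x. h \<xi> x + h \<eta> x)) \<and>
     (\<forall>\<xi>\<in>D. \<forall>c::complex. (\<lambda>x. c * \<xi> x) \<in> D \<and> h (\<lambda>x. c * \<xi> x) = (\<lambda>x. c * h \<xi> x)) \<and>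
     (\<forall>\<xi>\<in>D. h \<xi> \<in> l2)"

definition closed_operator :: "('a \<Rightarrow> complex) set \<Rightarrow> (('a \<Rightarrow> complex) \<Rightarrow> ('a \<Rightarrow> complex)) \<Rightarrow> bool" where
  "closed_operator D h \<longleftrightarrow>
     (\<forall>s \<xi> \<eta>. (\<forall>n. s n \<in> D) \<and> \<xi> \<in> l2 \<and> \<eta> \<in> l2 \<and>
        (\<lambda>n. l2norm (\<lambda>x. s n x - \<xi> x)) \<longlonglongrightarrow> 0 \<and>
        (\<lambda>n. l2norm (\<lambda>x. h (s n) x - \<eta> x)) \<longlonglongrightarrow> 0
      \<longrightarrow> \<xi> \<in> D \<and> h \<xi> = \<eta>)"

text \<open>Admissible: closed operator, c00 in the domain, and
  h xi = sum_y <xi, delta_y> h delta_y (unconditional convergence in l2 norm;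
  note <xi, delta_y> = xi y).\<close>
definition admissible :: "('a \<Rightarrow> complex) set \<Rightarrow> (('a \<Rightarrow> complex) \<Rightarrow> ('a \<Rightarrow> complex)) \<Rightarrow> bool" where
  "admissible D h \<longleftrightarrow>
     is_operator D h \<and> closed_operator D h \<and> c00 \<subseteq> D \<and>
     (\<forall>\<xi>\<in>D. ((\<lambda>F. l2norm (\<lambda>x. (\<Sum>y\<in>F. \<xi> y * h (delta y) x) - h \<xi> x)) \<longlongrightarrow> 0)
                 (finite_subsets_at_top UNIV))"

definition opnorm :: "('a \<Rightarrow> complex) set \<Rightarrow> (('a \<Rightarrow> complex) \<Rightarrow> ('a \<Rightarrow> complex)) \<Rightarrow> ereal" where
  "opnorm D h = Sup {ereal (l2norm (h \<xi>)) | \<xi>. \<xi> \<in> D \<and> l2norm \<xi> \<le> 1}"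

end

theory Submission
  imports Defs
begin

(* Truncating a vector \<xi> of l2 to finite sets F of points gives vectors of c00 of no larger
   norm that converge to \<xi> along the net of finite sets; if \<xi> lies in the domain of an
   admissible h, then h applied to the truncations converges to h \<xi> as well, because h acts
   coordinatewise. Hence every value of h - k on dom(h) \<inter> dom(k) is a limit of values on c00 of
   no larger argument norm, which is (a). If h - k is bounded on c00 and \<xi> \<in> dom(h), take a
   sequence of truncations s_n with s_n \<rightarrow> \<xi> and h s_n \<rightarrow> h \<xi>; then (h - k) s_n is Cauchy, so
   k s_n converges, and closedness of k gives \<xi> \<in> dom(k), which is (b). *)

lemma tendsto_along_sequence:
  fixes f :: "'b \<Rightarrow> 'c::metric_space"
  assumes "(f \<longlongrightarrow> l) F" "F \<noteq> bot" "eventually P F"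
  obtains s where "\<And>n. P (s n)" "(\<lambda>n. f (s n)) \<longlonglongrightarrow> l"
proof -
  have "\<exists>y. P y \<and> dist (f y) l < inverse (real (Suc n))" for n
    by (rule eventually_happens'[OF assms(2) eventually_conj[OF assms(3) tendstoD[OF assms(1)]]])
      simp
  then obtain s where P: "\<And>n. P (s n)" and dist: "\<And>n. dist (f (s n)) l < inverse (real (Suc n))"
    by metis
  have "(\<lambda>n. dist (f (s n)) l) \<longlonglongrightarrow> 0"
    using dist by (intro tendsto_sandwich[OF _ _ tendsto_const LIMSEQ_inverse_real_of_nat]
      always_eventually allI less_imp_le zero_le_dist)
  with P show ?thesis
    using that tendsto_dist_iff by blast
qed

section \<open>Square-summable functions\<close>

lemma l2norm_nonneg: "l2norm f \<ge> 0"
  unfolding l2norm_def by (simp add: infsum_nonneg)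

lemma l2norm_zero [simp]: "l2norm (\<lambda>x. 0) = 0"
  unfolding l2norm_def by simp

lemma sum_le_l2norm_sq:
  assumes "f \<in> l2" "finite A"
  shows "(\<Sum>x\<in>A. (cmod (f x))\<^sup>2) \<le> (l2norm f)\<^sup>2"
proof -
  have "(\<Sum>x\<in>A. (cmod (f x))\<^sup>2) \<le> infsum (\<lambda>x. (cmod (f x))\<^sup>2) UNIV"
    using assms by (intro finite_sum_le_infsum) (auto simp: l2_def)
  also have "\<dots> = (l2norm f)\<^sup>2"
    unfolding l2norm_def by (simp add: infsum_nonneg)
  finally show ?thesis .
qed

lemma l2_l2norm_le_if_sums_le:
  assumes "\<And>A. finite A \<Longrightarrow> (\<Sum>x\<in>A. (cmod (f x))\<^sup>2) \<le> C\<^sup>2" "0 \<le> C"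
  shows "f \<in> l2 \<and> l2norm f \<le> C"
proof -
  have summable: "(\<lambda>x. (cmod (f x))\<^sup>2) summable_on UNIV"
    by (rule nonneg_bdd_above_summable_on) (use assms in \<open>auto intro!: bdd_aboveI\<close>)
  have "infsum (\<lambda>x. (cmod (f x))\<^sup>2) UNIV \<le> C\<^sup>2"
    by (rule infsum_le_finite_sums[OF summable]) (use assms in auto)
  then have "l2norm f \<le> sqrt (C\<^sup>2)"
    unfolding l2norm_def by (rule real_sqrt_le_mono)
  with summable assms(2) show ?thesis
    by (simp add: l2_def)
qed

lemma norm_le_l2norm: "f \<in> l2 \<Longrightarrow> cmod (f x) \<le> l2norm f"
  using sum_le_l2norm_sq[of f "{x}"] l2norm_nonneg[of f]
  by (simp add: abs_le_square_iff power2_le_iff_abs_le)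

lemma l2norm_eq_0_imp_zero: "f \<in> l2 \<Longrightarrow> l2norm f = 0 \<Longrightarrow> f = (\<lambda>x. 0)"
  using norm_le_l2norm[of f] by fastforce

lemma l2_add:
  assumes "f \<in> l2" "g \<in> l2"
  shows "(\<lambda>x. f x + g x) \<in> l2 \<and> l2norm (\<lambda>x. f x + g x) \<le> l2norm f + l2norm g"
proof (rule l2_l2norm_le_if_sums_le)
  fix A :: "'a set"
  assume A: "finite A"
  have L2_set_le: "L2_set (\<lambda>x. cmod (u x)) A \<le> l2norm u" if "u \<in> l2" for u
    unfolding L2_set_def using sum_le_l2norm_sq[OF that A] l2norm_nonneg[of u]
    by (intro real_le_lsqrt) auto
  have "L2_set (\<lambda>x. cmod (f x + g x)) A \<le> L2_set (\<lambda>x. cmod (f x) + cmod (g x)) A"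
    by (rule L2_set_mono) (auto simp: norm_triangle_ineq)
  also have "\<dots> \<le> L2_set (\<lambda>x. cmod (f x)) A + L2_set (\<lambda>x. cmod (g x)) A"
    by (rule L2_set_triangle_ineq)
  also have "\<dots> \<le> l2norm f + l2norm g"
    using L2_set_le[OF assms(1)] L2_set_le[OF assms(2)] by simp
  finally show "(\<Sum>x\<in>A. (cmod (f x + g x))\<^sup>2) \<le> (l2norm f + l2norm g)\<^sup>2"
    unfolding L2_set_def by (rule sqrt_le_D)
qed (simp add: l2norm_nonneg)

lemma l2_scale:
  assumes "f \<in> l2"
  shows "(\<lambda>x. c * f x) \<in> l2 \<and> l2norm (\<lambda>x. c * f x) = cmod c * l2norm f"
proof -
  have sq: "(\<lambda>x. (cmod (c * f x))\<^sup>2) = (\<lambda>x. (cmod c)\<^sup>2 * (cmod (f x))\<^sup>2)"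
    by (simp add: norm_mult power_mult_distrib)
  have "(\<lambda>x. (cmod c)\<^sup>2 * (cmod (f x))\<^sup>2) summable_on UNIV"
    using assms by (intro summable_on_cmult_right) (simp add: l2_def)
  moreover have "l2norm (\<lambda>x. c * f x) = cmod c * l2norm f"
    unfolding l2norm_def sq infsum_cmult_right' by (simp add: real_sqrt_mult)
  ultimately show ?thesis
    by (simp add: l2_def sq)
qed

lemma l2_diff: "f \<in> l2 \<Longrightarrow> g \<in> l2 \<Longrightarrow> (\<lambda>x. f x - g x) \<in> l2"
  using l2_add[of f "\<lambda>x. -1 * g x"] l2_scale[of g "-1"] by simp

lemma l2norm_minus_commute: "l2norm (\<lambda>x. f x - g x) = l2norm (\<lambda>x. g x - f x)"
  unfolding l2norm_def by (simp add: norm_minus_commute)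

lemma l2norm_triangle:
  assumes "f \<in> l2" "g \<in> l2" "u \<in> l2"
  shows "l2norm (\<lambda>x. f x - g x) \<le> l2norm (\<lambda>x. f x - u x) + l2norm (\<lambda>x. u x - g x)"
  using l2_add[OF l2_diff[OF assms(1,3)] l2_diff[OF assms(3,2)]] by simp

lemma tendsto_l2norm:
  assumes "eventually (\<lambda>i. u i \<in> l2) F" "v \<in> l2"
    and "((\<lambda>i. l2norm (\<lambda>x. u i x - v x)) \<longlongrightarrow> 0) F"
  shows "((\<lambda>i. l2norm (u i)) \<longlongrightarrow> l2norm v) F"
proof (rule LIM_zero_cancel, rule Lim_null_comparison[OF _ assms(3)])
  show "eventually (\<lambda>i. norm (l2norm (u i) - l2norm v) \<le> l2norm (\<lambda>x. u i x - v x)) F"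
    using assms(1)
  proof eventually_elim
    case (elim i)
    have "l2norm (u i) \<le> l2norm (\<lambda>x. u i x - v x) + l2norm v"
      using l2_add[OF l2_diff[OF elim assms(2)] assms(2)] by simp
    moreover have "l2norm v \<le> l2norm (\<lambda>x. v x - u i x) + l2norm (u i)"
      using l2_add[OF l2_diff[OF assms(2) elim] elim] by simp
    ultimately show ?case
      using l2norm_minus_commute[of v "u i"] by simp
  qed
qed

lemma l2_tendsto_diff:
  assumes l2: "eventually (\<lambda>i. u i \<in> l2 \<and> v i \<in> l2) F" "u' \<in> l2" "v' \<in> l2"
    and u: "((\<lambda>i. l2norm (\<lambda>x. u i x - u' x)) \<longlongrightarrow> 0) F"
    and v: "((\<lambda>i. l2norm (\<lambda>x. v i x - v' x)) \<longlongrightarrow> 0) F"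
  shows "((\<lambda>i. l2norm (\<lambda>x. (u i x - v i x) - (u' x - v' x))) \<longlongrightarrow> 0) F"
proof (rule Lim_null_comparison[OF _ tendsto_add_zero[OF u v]])
  show "eventually (\<lambda>i. norm (l2norm (\<lambda>x. (u i x - v i x) - (u' x - v' x)))
      \<le> l2norm (\<lambda>x. u i x - u' x) + l2norm (\<lambda>x. v i x - v' x)) F"
    using l2(1)
  proof eventually_elim
    case (elim i)
    have "(\<lambda>x. (u i x - v i x) - (u' x - v' x)) = (\<lambda>x. (u i x - u' x) + (v' x - v i x))"
      by (rule ext) algebra
    with l2_add[OF l2_diff[OF _ l2(2)] l2_diff[OF l2(3)], of "u i" "v i"] elim show ?case
      using l2norm_minus_commute[of v' "v i"] by (simp add: l2norm_nonneg)
  qed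
qed

lemma l2_l2norm_le_pointwise_limit:
  assumes lim: "\<And>x. (\<lambda>m. g m x) \<longlonglongrightarrow> g' x"
    and bound: "eventually (\<lambda>m. g m \<in> l2 \<and> l2norm (g m) \<le> C) sequentially"
  shows "g' \<in> l2 \<and> l2norm g' \<le> C"
proof (rule l2_l2norm_le_if_sums_le)
  fix A :: "'a set"
  assume A: "finite A"
  have "(\<lambda>m. \<Sum>x\<in>A. (cmod (g m x))\<^sup>2) \<longlonglongrightarrow> (\<Sum>x\<in>A. (cmod (g' x))\<^sup>2)"
    by (intro tendsto_intros lim)
  moreover have "eventually (\<lambda>m. (\<Sum>x\<in>A. (cmod (g m x))\<^sup>2) \<le> C\<^sup>2) sequentially"
    using bound
  proof eventually_elim
    case (elim m)
    then have "(l2norm (g m))\<^sup>2 \<le> C\<^sup>2"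
      by (intro power_mono) (auto simp: l2norm_nonneg)
    with elim show ?case
      using sum_le_l2norm_sq[OF _ A, of "g m"] by linarith
  qed
  ultimately show "(\<Sum>x\<in>A. (cmod (g' x))\<^sup>2) \<le> C\<^sup>2"
    by (rule tendsto_upperbound) simp
next
  obtain m where "l2norm (g m) \<le> C"
    using eventually_happens'[OF trivial_limit_sequentially bound] by blast
  then show "0 \<le> C"
    using l2norm_nonneg order_trans by blast
qed

lemma l2_cauchy_pointwise_convergent:
  fixes f :: "nat \<Rightarrow> 'a \<Rightarrow> complex"
  assumes l2: "\<And>n. f n \<in> l2"
    and cauchy: "\<And>e. e > 0 \<Longrightarrow> \<exists>N. \<forall>m\<ge>N. \<forall>n\<ge>N. l2norm (\<lambda>x. f m x - f n x) < e"
  obtains \<eta> where "\<And>x. (\<lambda>n. f n x) \<longlonglongrightarrow> \<eta> x"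
proof -
  have "Cauchy (\<lambda>n. f n x)" for x
  proof (rule metric_CauchyI)
    fix e :: real
    assume "e > 0"
    then obtain N where "\<forall>m\<ge>N. \<forall>n\<ge>N. l2norm (\<lambda>x. f m x - f n x) < e"
      using cauchy by blast
    moreover have "dist (f m x) (f n x) \<le> l2norm (\<lambda>x. f m x - f n x)" for m n
      using norm_le_l2norm[OF l2_diff[OF l2[of m] l2[of n]], of x] by (simp add: dist_norm)
    ultimately show "\<exists>N. \<forall>m\<ge>N. \<forall>n\<ge>N. dist (f m x) (f n x) < e"
      by (meson le_less_trans)
  qed
  then have "\<forall>x. \<exists>L. (\<lambda>n. f n x) \<longlonglongrightarrow> L"
    by (simp add: Cauchy_convergent_iff convergent_def)
  then show ?thesis
    using that by (metis choice)
qed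

lemma l2_complete:
  fixes f :: "nat \<Rightarrow> 'a \<Rightarrow> complex"
  assumes l2: "\<And>n. f n \<in> l2"
    and cauchy: "\<And>e. e > 0 \<Longrightarrow> \<exists>N. \<forall>m\<ge>N. \<forall>n\<ge>N. l2norm (\<lambda>x. f m x - f n x) < e"
  obtains \<eta> where "\<eta> \<in> l2" "(\<lambda>n. l2norm (\<lambda>x. f n x - \<eta> x)) \<longlonglongrightarrow> 0"
proof -
  obtain \<eta> where \<eta>: "\<And>x. (\<lambda>n. f n x) \<longlonglongrightarrow> \<eta> x"
    using l2_cauchy_pointwise_convergent[OF l2 cauchy] by blast
  have near: "eventually (\<lambda>n. (\<lambda>x. f n x - \<eta> x) \<in> l2 \<and> l2norm (\<lambda>x. f n x - \<eta> x) \<le> e) sequentially"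
    if "e > 0" for e
  proof -
    obtain N where N: "\<forall>m\<ge>N. \<forall>n\<ge>N. l2norm (\<lambda>x. f n x - f m x) < e"
      using cauchy[OF \<open>e > 0\<close>] by blast
    have "(\<lambda>x. f n x - \<eta> x) \<in> l2 \<and> l2norm (\<lambda>x. f n x - \<eta> x) \<le> e" if "n \<ge> N" for n
    proof (rule l2_l2norm_le_pointwise_limit)
      show "(\<lambda>m. f n x - f m x) \<longlonglongrightarrow> f n x - \<eta> x" for x
        by (intro tendsto_intros \<eta>)
      show "eventually (\<lambda>m. (\<lambda>x. f n x - f m x) \<in> l2 \<and> l2norm (\<lambda>x. f n x - f m x) \<le> e) sequentially"
        using eventually_ge_at_top[of N]
      proof eventually_elim
        case (elim m)
        then show ?case
          using N that l2_diff[OF l2[of n] l2[of m]] less_imp_le by blast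
      qed
    qed
    then show ?thesis
      unfolding eventually_sequentially by blast
  qed
  obtain N where "(\<lambda>x. f N x - \<eta> x) \<in> l2"
    using eventually_happens'[OF trivial_limit_sequentially near[of 1]] by auto
  from l2_diff[OF l2[of N] this] have "\<eta> \<in> l2"
    by simp
  moreover have "(\<lambda>n. l2norm (\<lambda>x. f n x - \<eta> x)) \<longlonglongrightarrow> 0"
  proof (rule order_tendstoI)
    show "eventually (\<lambda>n. a < l2norm (\<lambda>x. f n x - \<eta> x)) sequentially" if "a < 0" for a
      using that l2norm_nonneg by (intro always_eventually allI) (rule less_le_trans)
    show "eventually (\<lambda>n. l2norm (\<lambda>x. f n x - \<eta> x) < a) sequentially" if "a > 0" for a
      using near[of "a / 2"] that by (auto elim: eventually_mono)
  qed
  ultimately show ?thesis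
    using that by blast
qed

section \<open>Operators and operator norms\<close>

lemma is_operatorD:
  assumes "is_operator D h"
  shows "D \<subseteq> l2" "\<And>\<xi>. \<xi> \<in> D \<Longrightarrow> h \<xi> \<in> l2" "(\<lambda>x. 0) \<in> D"
    "\<And>\<xi> \<eta>. \<xi> \<in> D \<Longrightarrow> \<eta> \<in> D \<Longrightarrow>
       (\<lambda>x. \<xi> x + \<eta> x) \<in> D \<and> h (\<lambda>x. \<xi> x + \<eta> x) = (\<lambda>x. h \<xi> x + h \<eta> x)"
    "\<And>\<xi> c. \<xi> \<in> D \<Longrightarrow> (\<lambda>x. c * \<xi> x) \<in> D \<and> h (\<lambda>x. c * \<xi> x) = (\<lambda>x. c * h \<xi> x)"
  using assms unfolding is_operator_def by auto

lemma admissibleD: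
  assumes "admissible D h"
  shows "is_operator D h" "closed_operator D h" "c00 \<subseteq> D"
  using assms unfolding admissible_def by auto

lemma closed_operatorD:
  assumes "closed_operator D h" "\<And>n. s n \<in> D" "\<xi> \<in> l2" "\<eta> \<in> l2"
    "(\<lambda>n. l2norm (\<lambda>x. s n x - \<xi> x)) \<longlonglongrightarrow> 0" "(\<lambda>n. l2norm (\<lambda>x. h (s n) x - \<eta> x)) \<longlonglongrightarrow> 0"
  shows "\<xi> \<in> D \<and> h \<xi> = \<eta>"
  using assms unfolding closed_operator_def by blast

lemma is_operator_apply_zero:
  assumes "is_operator D h"
  shows "h (\<lambda>x. 0) = (\<lambda>x. 0)"
  using is_operatorD(5)[OF assms is_operatorD(3)[OF assms], of 0] by simp

lemma is_operator_apply_diff: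
  assumes "is_operator D h" "\<xi> \<in> D" "\<eta> \<in> D"
  shows "(\<lambda>x. \<xi> x - \<eta> x) \<in> D \<and> h (\<lambda>x. \<xi> x - \<eta> x) = (\<lambda>x. h \<xi> x - h \<eta> x)"
  using is_operatorD(4)[OF assms(1,2) is_operatorD(5)[OF assms(1,3), of "-1", THEN conjunct1]]
    is_operatorD(5)[OF assms(1,3), of "-1"] by simp

lemma is_operator_apply_sum:
  assumes "is_operator D h" "finite F" "\<And>y. y \<in> F \<Longrightarrow> g y \<in> D"
  shows "(\<lambda>x. \<Sum>y\<in>F. g y x) \<in> D \<and> h (\<lambda>x. \<Sum>y\<in>F. g y x) = (\<lambda>x. \<Sum>y\<in>F. h (g y) x)"
  using assms(2,3)
proof (induction F rule: finite_induct)
  case empty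
  then show ?case
    using is_operator_apply_zero[OF assms(1)] is_operatorD(3)[OF assms(1)] by simp
next
  case (insert a F)
  then show ?case
    using is_operatorD(4)[OF assms(1), of "g a" "\<lambda>x. \<Sum>y\<in>F. g y x"] by simp
qed

lemma is_operator_diff:
  assumes "is_operator Dh h" "is_operator Dk k"
  shows "is_operator (Dh \<inter> Dk) (\<lambda>\<xi> x. h \<xi> x - k \<xi> x)"
  using is_operatorD[OF assms(1)] is_operatorD[OF assms(2)]
  unfolding is_operator_def by (auto intro!: l2_diff simp: algebra_simps)

lemma is_operator_c00:
  assumes "is_operator D h" "c00 \<subseteq> D"
  shows "is_operator c00 h"
proof -
  have "(\<lambda>x. \<xi> x + \<eta> x) \<in> c00" if "\<xi> \<in> c00" "\<eta> \<in> c00" for \<xi> \<eta> :: "'a \<Rightarrow> complex"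
    using that unfolding c00_def
    by (auto intro: finite_subset[of _ "{x. \<xi> x \<noteq> 0} \<union> {x. \<eta> x \<noteq> 0}"])
  moreover have "(\<lambda>x. c * \<xi> x) \<in> c00" if "\<xi> \<in> c00" for \<xi> :: "'a \<Rightarrow> complex" and c
    using that unfolding c00_def by (auto elim!: finite_subset[rotated])
  moreover have "(\<lambda>x. 0) \<in> c00"
    unfolding c00_def by simp
  ultimately show ?thesis
    using assms is_operatorD[OF assms(1)] unfolding is_operator_def by blast
qed

lemma opnorm_upper:
  "\<xi> \<in> D \<Longrightarrow> l2norm \<xi> \<le> 1 \<Longrightarrow> ereal (l2norm (h \<xi>)) \<le> opnorm D h"
  unfolding opnorm_def by (rule Sup_upper) auto

lemma opnorm_leI:
  "(\<And>\<xi>. \<xi> \<in> D \<Longrightarrow> l2norm \<xi> \<le> 1 \<Longrightarrow> ereal (l2norm (h \<xi>)) \<le> B) \<Longrightarrow> opnorm D h \<le> B"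
  unfolding opnorm_def by (rule Sup_least) auto

lemma opnorm_mono: "D \<subseteq> D' \<Longrightarrow> opnorm D h \<le> opnorm D' h"
  unfolding opnorm_def by (rule Sup_subset_mono) auto

lemma l2norm_apply_le_opnorm:
  assumes op: "is_operator D h" and bound: "opnorm D h \<le> ereal M" and \<xi>: "\<xi> \<in> D"
  shows "l2norm (h \<xi>) \<le> M * l2norm \<xi>"
proof (cases "l2norm \<xi> = 0")
  case True
  then have "\<xi> = (\<lambda>x. 0)"
    using l2norm_eq_0_imp_zero is_operatorD(1)[OF op] \<xi> by blast
  with True show ?thesis
    using is_operator_apply_zero[OF op] by simp
next
  case False
  then have pos: "l2norm \<xi> > 0"
    using l2norm_nonneg[of \<xi>] by linarith
  define c where "c = complex_of_real (inverse (l2norm \<xi>))"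
  have c: "cmod c = inverse (l2norm \<xi>)"
    unfolding c_def using pos by (simp add: norm_inverse)
  have c\<xi>: "(\<lambda>x. c * \<xi> x) \<in> D" "h (\<lambda>x. c * \<xi> x) = (\<lambda>x. c * h \<xi> x)"
    using is_operatorD(5)[OF op \<xi>] by auto
  have "l2norm (\<lambda>x. c * \<xi> x) = 1"
    using l2_scale[of \<xi> c] is_operatorD(1)[OF op] \<xi> c pos by auto
  then have "ereal (l2norm (h (\<lambda>x. c * \<xi> x))) \<le> opnorm D h"
    using opnorm_upper[OF c\<xi>(1)] by simp
  also have "\<dots> \<le> ereal M"
    by (rule bound)
  finally have "l2norm (\<lambda>x. c * h \<xi> x) \<le> M"
    using c\<xi>(2) by simp
  then have "inverse (l2norm \<xi>) * l2norm (h \<xi>) \<le> M"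
    using l2_scale[of "h \<xi>" c] is_operatorD(2)[OF op \<xi>] c by simp
  with pos show ?thesis
    by (simp add: field_simps)
qed

section \<open>Truncation to finite sets of points\<close>

definition truncate :: "'a set \<Rightarrow> ('a \<Rightarrow> complex) \<Rightarrow> 'a \<Rightarrow> complex" where
  "truncate F \<xi> = (\<lambda>x. if x \<in> F then \<xi> x else 0)"

lemma truncate_c00: "finite F \<Longrightarrow> truncate F \<xi> \<in> c00"
  unfolding c00_def truncate_def by (auto elim!: finite_subset[rotated])

lemma l2norm_truncate_le:
  assumes "\<xi> \<in> l2"
  shows "l2norm (truncate F \<xi>) \<le> l2norm \<xi>"
proof -
  have "(\<Sum>x\<in>A. (cmod (truncate F \<xi> x))\<^sup>2) \<le> (l2norm \<xi>)\<^sup>2" if "finite A" for A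
  proof -
    have "(\<Sum>x\<in>A. (cmod (truncate F \<xi> x))\<^sup>2) \<le> (\<Sum>x\<in>A. (cmod (\<xi> x))\<^sup>2)"
      by (rule sum_mono) (simp add: truncate_def)
    also have "\<dots> \<le> (l2norm \<xi>)\<^sup>2"
      by (rule sum_le_l2norm_sq[OF assms that])
    finally show ?thesis .
  qed
  then show ?thesis
    using l2_l2norm_le_if_sums_le l2norm_nonneg by blast
qed

lemma truncate_tendsto:
  assumes "\<xi> \<in> l2"
  shows "((\<lambda>F. l2norm (\<lambda>x. truncate F \<xi> x - \<xi> x)) \<longlongrightarrow> 0) (finite_subsets_at_top UNIV)"
proof -
  define q where "q x = (cmod (\<xi> x))\<^sup>2" for x
  have summable: "q summable_on UNIV"
    using assms unfolding q_def l2_def by simp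
  then have "(sum q \<longlongrightarrow> infsum q UNIV) (finite_subsets_at_top UNIV)"
    using has_sum_infsum has_sum_def by blast
  then have "((\<lambda>F. sqrt (infsum q UNIV - sum q F)) \<longlongrightarrow> sqrt (infsum q UNIV - infsum q UNIV))
      (finite_subsets_at_top UNIV)"
    by (intro tendsto_intros)
  moreover have "eventually (\<lambda>F. sqrt (infsum q UNIV - sum q F) =
      l2norm (\<lambda>x. truncate F \<xi> x - \<xi> x)) (finite_subsets_at_top UNIV)"
  proof (rule eventually_finite_subsets_at_top_weakI)
    fix F :: "'a set"
    assume "finite F"
    then have "infsum q UNIV - sum q F = infsum q (UNIV - F)"
      using infsum_Diff[OF summable, of F] by simp
    also have "\<dots> = infsum (\<lambda>x. (cmod (truncate F \<xi> x - \<xi> x))\<^sup>2) UNIV"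
      by (rule infsum_cong_neutral) (auto simp: truncate_def q_def)
    finally show "sqrt (infsum q UNIV - sum q F) = l2norm (\<lambda>x. truncate F \<xi> x - \<xi> x)"
      unfolding l2norm_def by simp
  qed
  ultimately show ?thesis
    by (simp add: Lim_transform_eventually)
qed

lemma admissible_truncate_tendsto:
  assumes adm: "admissible D h" and \<xi>: "\<xi> \<in> D"
  shows "((\<lambda>F. l2norm (\<lambda>x. h (truncate F \<xi>) x - h \<xi> x)) \<longlongrightarrow> 0) (finite_subsets_at_top UNIV)"
proof -
  note op = admissibleD(1)[OF adm] and c00 = admissibleD(3)[OF adm]
  have "h (truncate F \<xi>) = (\<lambda>x. \<Sum>y\<in>F. \<xi> y * h (delta y) x)" if "finite F" for F
  proof -
    have "delta y \<in> c00" for y :: 'a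
      unfolding c00_def delta_def by (auto elim!: finite_subset[rotated, of _ "{y}"])
    then have "(\<lambda>x. \<xi> y * delta y x) \<in> D \<and> h (\<lambda>x. \<xi> y * delta y x) = (\<lambda>x. \<xi> y * h (delta y) x)"
      for y
      using is_operatorD(5)[OF op] c00 by blast
    moreover have "truncate F \<xi> = (\<lambda>x. \<Sum>y\<in>F. \<xi> y * delta y x)"
      using that unfolding truncate_def delta_def by (auto simp: if_distrib cong: if_cong)
    ultimately show ?thesis
      using is_operator_apply_sum[OF op that, of "\<lambda>y x. \<xi> y * delta y x"] by simp
  qed
  then have "eventually (\<lambda>F. l2norm (\<lambda>x. (\<Sum>y\<in>F. \<xi> y * h (delta y) x) - h \<xi> x) =
      l2norm (\<lambda>x. h (truncate F \<xi>) x - h \<xi> x)) (finite_subsets_at_top UNIV)"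
    by (intro eventually_finite_subsets_at_top_weakI) simp
  moreover have "((\<lambda>F. l2norm (\<lambda>x. (\<Sum>y\<in>F. \<xi> y * h (delta y) x) - h \<xi> x)) \<longlongrightarrow> 0)
      (finite_subsets_at_top UNIV)"
    using adm \<xi> unfolding admissible_def by blast
  ultimately show ?thesis
    by (rule Lim_transform_eventually[rotated])
qed

lemma opnorm_eq_opnorm_c00:
  assumes op: "is_operator D A" and c00: "c00 \<subseteq> D"
    and approx: "\<And>\<xi>. \<xi> \<in> D \<Longrightarrow>
      ((\<lambda>F. l2norm (\<lambda>x. A (truncate F \<xi>) x - A \<xi> x)) \<longlongrightarrow> 0) (finite_subsets_at_top UNIV)"
  shows "opnorm D A = opnorm c00 A"
proof (rule antisym)
  show "opnorm D A \<le> opnorm c00 A"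
  proof (rule opnorm_leI)
    fix \<xi>
    assume \<xi>: "\<xi> \<in> D" "l2norm \<xi> \<le> 1"
    have trunc: "truncate F \<xi> \<in> c00" "l2norm (truncate F \<xi>) \<le> 1" if "finite F" for F
      using truncate_c00[OF that] l2norm_truncate_le[of \<xi> F] is_operatorD(1)[OF op] \<xi> by auto
    have "eventually (\<lambda>F. A (truncate F \<xi>) \<in> l2) (finite_subsets_at_top UNIV)"
      using trunc c00 is_operatorD(2)[OF op] by blast
    then have "((\<lambda>F. ereal (l2norm (A (truncate F \<xi>)))) \<longlongrightarrow> ereal (l2norm (A \<xi>)))
        (finite_subsets_at_top UNIV)"
      using is_operatorD(2)[OF op] \<xi>(1) by (intro tendsto_ereal tendsto_l2norm approx)
    moreover have "eventually (\<lambda>F. ereal (l2norm (A (truncate F \<xi>))) \<le> opnorm c00 A)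
        (finite_subsets_at_top UNIV)"
    proof (rule eventually_finite_subsets_at_top_weakI)
      fix F :: "'a set"
      assume "finite F"
      then show "ereal (l2norm (A (truncate F \<xi>))) \<le> opnorm c00 A"
        using trunc by (intro opnorm_upper)
    qed
    ultimately show "ereal (l2norm (A \<xi>)) \<le> opnorm c00 A"
      by (rule tendsto_le[OF finite_subsets_at_top_neq_bot tendsto_const])
  qed
  show "opnorm c00 A \<le> opnorm D A"
    by (rule opnorm_mono[OF c00])
qed

section \<open>Comparing two admissible operators\<close>

lemma admissible_c00_approximation:
  assumes adm: "admissible D h" and \<xi>: "\<xi> \<in> D"
  obtains s where "\<And>n. s n \<in> c00" "(\<lambda>n. l2norm (\<lambda>x. s n x - \<xi> x)) \<longlonglongrightarrow> 0"
    "(\<lambda>n. l2norm (\<lambda>x. h (s n) x - h \<xi> x)) \<longlonglongrightarrow> 0"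
proof -
  let ?d = "\<lambda>F. l2norm (\<lambda>x. truncate F \<xi> x - \<xi> x)"
  let ?e = "\<lambda>F. l2norm (\<lambda>x. h (truncate F \<xi>) x - h \<xi> x)"
  have "\<xi> \<in> l2"
    using is_operatorD(1)[OF admissibleD(1)[OF adm]] \<xi> by blast
  then have "((\<lambda>F. ?d F + ?e F) \<longlongrightarrow> 0 + 0) (finite_subsets_at_top UNIV)"
    using tendsto_add[OF truncate_tendsto admissible_truncate_tendsto[OF adm \<xi>]] by blast
  then obtain S where S: "\<And>n. finite (S n)" and lim: "(\<lambda>n. ?d (S n) + ?e (S n)) \<longlonglongrightarrow> 0"
    by (rule tendsto_along_sequence) auto
  have "(\<lambda>n. ?d (S n)) \<longlonglongrightarrow> 0" "(\<lambda>n. ?e (S n)) \<longlonglongrightarrow> 0"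
    by (auto intro!: tendsto_sandwich[OF _ _ tendsto_const lim] simp: l2norm_nonneg)
  with S show ?thesis
    using that[of "\<lambda>n. truncate (S n) \<xi>"] truncate_c00 by blast
qed

lemma opnorm_less_infinity_imp_bounded:
  assumes op: "is_operator D A" and fin: "opnorm D A < \<infinity>"
  obtains M where "0 \<le> M" "\<And>\<xi>. \<xi> \<in> D \<Longrightarrow> l2norm (A \<xi>) \<le> M * l2norm \<xi>"
proof -
  from fin have "opnorm D A \<noteq> \<infinity>"
    by simp
  then obtain n :: nat where "opnorm D A < ereal (real n)"
    by (auto simp: less_PInf_Ex_of_nat)
  then have "l2norm (A \<xi>) \<le> real n * l2norm \<xi>" if "\<xi> \<in> D" for \<xi>
    using l2norm_apply_le_opnorm[OF op less_imp_le that] by simp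
  then show ?thesis
    using that[of "real n"] by simp
qed

lemma opnorm_diff_commute: "opnorm D (\<lambda>\<xi> x. h \<xi> x - k \<xi> x) = opnorm D (\<lambda>\<xi> x. k \<xi> x - h \<xi> x)"
  unfolding opnorm_def by (simp add: l2norm_minus_commute[of "h _"])

lemma bounded_operator_image_convergent:
  assumes op: "is_operator D A" and "0 \<le> M"
    and bound: "\<And>\<phi>. \<phi> \<in> D \<Longrightarrow> l2norm (A \<phi>) \<le> M * l2norm \<phi>"
    and s: "\<And>n. s n \<in> D" and \<xi>: "\<xi> \<in> l2" and s_lim: "(\<lambda>n. l2norm (\<lambda>x. s n x - \<xi> x)) \<longlonglongrightarrow> 0"
  obtains \<eta> where "\<eta> \<in> l2" "(\<lambda>n. l2norm (\<lambda>x. A (s n) x - \<eta> x)) \<longlonglongrightarrow> 0"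
proof -
  have s_l2: "s n \<in> l2" for n
    using is_operatorD(1)[OF op] s by blast
  have cauchy: "\<exists>N. \<forall>m\<ge>N. \<forall>n\<ge>N. l2norm (\<lambda>x. A (s m) x - A (s n) x) < e" if "e > 0" for e
  proof -
    have "(\<lambda>n. M * l2norm (\<lambda>x. s n x - \<xi> x)) \<longlonglongrightarrow> M * 0"
      by (intro tendsto_intros s_lim)
    then obtain N where N: "\<And>n. n \<ge> N \<Longrightarrow> M * l2norm (\<lambda>x. s n x - \<xi> x) < e / 2"
      using order_tendstoD(2)[of _ 0 sequentially "e / 2"] \<open>e > 0\<close>
      by (auto simp: eventually_sequentially)
    have "l2norm (\<lambda>x. A (s m) x - A (s n) x) < e" if "m \<ge> N" "n \<ge> N" for m n
    proof -
      have "l2norm (\<lambda>x. A (s m) x - A (s n) x) = l2norm (A (\<lambda>x. s m x - s n x))"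
        using is_operator_apply_diff[OF op s s] by simp
      also have "\<dots> \<le> M * l2norm (\<lambda>x. s m x - s n x)"
        using bound is_operator_apply_diff[OF op s s] by blast
      also have "\<dots> \<le> M * (l2norm (\<lambda>x. s m x - \<xi> x) + l2norm (\<lambda>x. s n x - \<xi> x))"
        using l2norm_triangle[OF s_l2 s_l2 \<xi>, of m n] l2norm_minus_commute[of \<xi> "s n"] \<open>0 \<le> M\<close>
        by (simp add: mult_left_mono)
      also have "\<dots> < e"
        using N[OF \<open>m \<ge> N\<close>] N[OF \<open>n \<ge> N\<close>] by (simp add: distrib_left)
      finally show ?thesis .
    qed
    then show ?thesis
      by blast
  qed
  obtain \<eta> where "\<eta> \<in> l2" "(\<lambda>n. l2norm (\<lambda>x. A (s n) x - \<eta> x)) \<longlonglongrightarrow> 0"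
    by (rule l2_complete[OF is_operatorD(2)[OF op s] cauchy])
  then show ?thesis
    by (rule that)
qed

lemma admissible_dom_subset:
  assumes adm_h: "admissible Dh h" and adm_k: "admissible Dk k"
    and fin: "opnorm c00 (\<lambda>\<xi> x. h \<xi> x - k \<xi> x) < \<infinity>"
  shows "Dh \<subseteq> Dk"
proof
  fix \<xi>
  assume \<xi>: "\<xi> \<in> Dh"
  note op_h = admissibleD(1)[OF adm_h] and op_k = admissibleD(1)[OF adm_k]
  have c00: "c00 \<subseteq> Dh" "c00 \<subseteq> Dk"
    using admissibleD(3) adm_h adm_k by blast+
  have op: "is_operator c00 (\<lambda>\<xi> x. h \<xi> x - k \<xi> x)"
    by (rule is_operator_c00[OF is_operator_diff[OF op_h op_k]]) (use c00 in blast)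
  obtain M where "0 \<le> M" and bound: "\<And>\<phi>. \<phi> \<in> c00 \<Longrightarrow> l2norm (\<lambda>x. h \<phi> x - k \<phi> x) \<le> M * l2norm \<phi>"
    by (rule opnorm_less_infinity_imp_bounded[OF op fin]) blast
  obtain s where s: "\<And>n. s n \<in> c00" and s_lim: "(\<lambda>n. l2norm (\<lambda>x. s n x - \<xi> x)) \<longlonglongrightarrow> 0"
    and hs_lim: "(\<lambda>n. l2norm (\<lambda>x. h (s n) x - h \<xi> x)) \<longlonglongrightarrow> 0"
    using admissible_c00_approximation[OF adm_h \<xi>] by blast
  have \<xi>_l2: "\<xi> \<in> l2" "h \<xi> \<in> l2"
    using \<xi> is_operatorD(1,2)[OF op_h] by auto
  obtain \<eta> where \<eta>: "\<eta> \<in> l2" "(\<lambda>n. l2norm (\<lambda>x. (h (s n) x - k (s n) x) - \<eta> x)) \<longlonglongrightarrow> 0"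
    by (rule bounded_operator_image_convergent[OF op \<open>0 \<le> M\<close> bound s \<xi>_l2(1) s_lim])
  have "h (s n) \<in> l2" "(\<lambda>x. h (s n) x - k (s n) x) \<in> l2" for n
    using s is_operatorD(2)[OF op] is_operatorD(2)[OF op_h] c00 by blast+
  then have "(\<lambda>n. l2norm (\<lambda>x. (h (s n) x - (h (s n) x - k (s n) x)) - (h \<xi> x - \<eta> x))) \<longlonglongrightarrow> 0"
    by (intro l2_tendsto_diff[OF _ \<xi>_l2(2) \<eta>(1) hs_lim \<eta>(2)] always_eventually) simp
  then have "(\<lambda>n. l2norm (\<lambda>x. k (s n) x - (h \<xi> x - \<eta> x))) \<longlonglongrightarrow> 0"
    by simp
  then show "\<xi> \<in> Dk"
    using closed_operatorD[OF admissibleD(2)[OF adm_k] _ \<xi>_l2(1) l2_diff[OF \<xi>_l2(2) \<eta>(1)] s_lim]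
      s c00 by blast
qed

lemma admissible_diff_truncate_tendsto:
  assumes adm_h: "admissible Dh h" and adm_k: "admissible Dk k" and \<xi>: "\<xi> \<in> Dh \<inter> Dk"
  shows "((\<lambda>F. l2norm (\<lambda>x. (h (truncate F \<xi>) x - k (truncate F \<xi>) x) - (h \<xi> x - k \<xi> x))) \<longlongrightarrow> 0)
    (finite_subsets_at_top UNIV)"
proof (rule l2_tendsto_diff)
  note op_h = admissibleD(1)[OF adm_h] and op_k = admissibleD(1)[OF adm_k]
  have l2: "h \<phi> \<in> l2" "k \<phi> \<in> l2" if "\<phi> \<in> Dh \<inter> Dk" for \<phi>
    using that is_operatorD(2)[OF op_h] is_operatorD(2)[OF op_k] by blast+
  have "truncate F \<xi> \<in> Dh \<inter> Dk" if "finite F" for F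
    using truncate_c00[OF that] admissibleD(3)[OF adm_h] admissibleD(3)[OF adm_k] by blast
  then show "eventually (\<lambda>F. h (truncate F \<xi>) \<in> l2 \<and> k (truncate F \<xi>) \<in> l2) (finite_subsets_at_top UNIV)"
    by (intro eventually_finite_subsets_at_top_weakI conjI l2)
  show "h \<xi> \<in> l2" "k \<xi> \<in> l2"
    using l2 \<xi> by blast+
  show "((\<lambda>F. l2norm (\<lambda>x. h (truncate F \<xi>) x - h \<xi> x)) \<longlongrightarrow> 0) (finite_subsets_at_top UNIV)"
    using \<xi> by (intro admissible_truncate_tendsto[OF adm_h]) blast
  show "((\<lambda>F. l2norm (\<lambda>x. k (truncate F \<xi>) x - k \<xi> x)) \<longlongrightarrow> 0) (finite_subsets_at_top UNIV)"
    using \<xi> by (intro admissible_truncate_tendsto[OF adm_k]) blast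
qed

theorem proposition2p1p2:
  fixes Dh Dk :: "('a::metric_space \<Rightarrow> complex) set"
    and h k :: "('a \<Rightarrow> complex) \<Rightarrow> ('a \<Rightarrow> complex)"
  assumes "unif_locally_finite TYPE('a)"
    and "admissible Dh h" and "admissible Dk k"
  shows "opnorm (Dh \<inter> Dk) (\<lambda>\<xi> x. h \<xi> x - k \<xi> x) = opnorm c00 (\<lambda>\<xi> x. h \<xi> x - k \<xi> x)
         \<and> (opnorm c00 (\<lambda>\<xi> x. h \<xi> x - k \<xi> x) < \<infinity> \<longrightarrow> Dh = Dk)"
proof
  let ?A = "\<lambda>\<xi> x. h \<xi> x - k \<xi> x"
  have op: "is_operator (Dh \<inter> Dk) ?A"
    by (rule is_operator_diff[OF admissibleD(1)[OF assms(2)] admissibleD(1)[OF assms(3)]])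
  have c00: "c00 \<subseteq> Dh \<inter> Dk"
    using admissibleD(3)[OF assms(2)] admissibleD(3)[OF assms(3)] by blast
  show "opnorm (Dh \<inter> Dk) ?A = opnorm c00 ?A"
  proof (rule opnorm_eq_opnorm_c00[OF op c00])
    fix \<xi>
    assume "\<xi> \<in> Dh \<inter> Dk"
    from admissible_diff_truncate_tendsto[OF assms(2,3) this]
    show "((\<lambda>F. l2norm (\<lambda>x. ?A (truncate F \<xi>) x - ?A \<xi> x)) \<longlongrightarrow> 0) (finite_subsets_at_top UNIV)" .
  qed
  show "opnorm c00 ?A < \<infinity> \<longrightarrow> Dh = Dk"
  proof
    assume fin: "opnorm c00 ?A < \<infinity>"
    then have fin': "opnorm c00 (\<lambda>\<xi> x. k \<xi> x - h \<xi> x) < \<infinity>"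
      by (simp only: opnorm_diff_commute[of c00 k h])
    show "Dh = Dk"
      using admissible_dom_subset[OF assms(2,3) fin] admissible_dom_subset[OF assms(3,2) fin']
      by (rule subset_antisym)
  qed
qed

end
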